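(* Let $G$ be a bipartite graph with parts $X$ and $Y$ such that every vertex in $Y$ has degree at least $(|X|+|Y|)/2$. Then $G$ contains a path covering $2|Y|$ vertices. *)

theory Defs
  imports Main
begin

definition bipartite_graph :: "'a set \<Rightarrow> 'a set \<Rightarrow> ('a \<Rightarrow> 'a \<Rightarrow> bool) \<Rightarrow> bool" where
  "bipartite_graph X Y E \<longleftrightarrow> finite X \<and> finite Y \<and> X \<inter> Y = {} \<and>
     (\<forall>u v. E u v \<longleftrightarrow> E v u) \<and>
     (\<forall>u v. E u v \<longrightarrow> (u \<in> X \<and> v \<in> Y) \<or> (u \<in> Y \<and> v \<in> X))"

definition degree :: "'a set \<Rightarrow> ('a \<Rightarrow> 'a \<Rightarrow> bool) \<Rightarrow> 'a \<Rightarrow> nat" where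
  "degree V E v = card {u \<in> V. E v u}"

definition is_path :: "'a set \<Rightarrow> ('a \<Rightarrow> 'a \<Rightarrow> bool) \<Rightarrow> 'a list \<Rightarrow> bool" where
  "is_path V E p \<longleftrightarrow> set p \<subseteq> V \<and> distinct p \<and>
     (\<forall>i. Suc i < length p \<longrightarrow> E (p ! i) (p ! Suc i))"

end

theory Submission
  imports Defs
begin

(* Two vertices of Y have degree at least (|X|+|Y|)/2 each inside X, so they share at least |Y|
   common neighbours.  Listing Y as y1, ..., yk, the path y1 x1 y2 x2 ... yk xk is then built
   greedily from the end: when yi is prepended, at most k - i vertices of X are used, so some
   common neighbour xi of yi and y(i+1) is still free. *)

lemma is_path_Nil: "is_path V E []"
  by (simp add: is_path_def)

lemma is_path_Cons:
  "is_path V E (a # p) \<longleftrightarrow>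
     a \<in> V \<and> a \<notin> set p \<and> (p \<noteq> [] \<longrightarrow> E a (hd p)) \<and> is_path V E p"
  by (cases p) (auto simp: is_path_def nth_Cons split: nat.splits)

lemma card_Int_ge_if_subsets:
  assumes "finite S" "A \<subseteq> S" "B \<subseteq> S"
  shows "card A + card B \<le> card S + card (A \<inter> B)"
proof -
  have "finite A" "finite B" using assms finite_subset by blast+
  then have "card A + card B = card (A \<union> B) + card (A \<inter> B)" by (rule card_Un_Int)
  also have "card (A \<union> B) \<le> card S" using assms by (intro card_mono) auto
  finally show ?thesis by simp
qed

lemma degree_bipartite_eq_card_neighbours:
  assumes "bipartite_graph X Y E" "y \<in> Y"
  shows "degree (X \<union> Y) E y = card {x \<in> X. E y x}"
proof -
  have "{u \<in> X \<union> Y. E y u} = {x \<in> X. E y x}"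
    using assms unfolding bipartite_graph_def by blast
  then show ?thesis by (simp add: degree_def)
qed

lemma card_common_neighbours_ge:
  assumes bg: "bipartite_graph X Y E"
    and deg: "\<forall>y\<in>Y. 2 * degree (X \<union> Y) E y \<ge> card X + card Y"
    and "y \<in> Y" "y' \<in> Y"
  shows "card Y \<le> card {x \<in> X. E y x \<and> E y' x}"
proof -
  have "finite X" using bg by (simp add: bipartite_graph_def)
  then have "card {x \<in> X. E y x} + card {x \<in> X. E y' x}
      \<le> card X + card ({x \<in> X. E y x} \<inter> {x \<in> X. E y' x})"
    by (intro card_Int_ge_if_subsets) auto
  also have "{x \<in> X. E y x} \<inter> {x \<in> X. E y' x} = {x \<in> X. E y x \<and> E y' x}" by blast
  finally have common: "card {x \<in> X. E y x} + card {x \<in> X. E y' x}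
      \<le> card X + card {x \<in> X. E y x \<and> E y' x}" .
  have "card X + card Y \<le> 2 * card {x \<in> X. E v x}" if "v \<in> Y" for v
    using deg that degree_bipartite_eq_card_neighbours[OF bg that] by auto
  from this[OF \<open>y \<in> Y\<close>] this[OF \<open>y' \<in> Y\<close>] common show ?thesis by linarith
qed

lemma alternating_path_through:
  assumes bg: "bipartite_graph X Y E"
    and "ys \<noteq> []" "distinct ys" "set ys \<subseteq> Y"
    and common: "\<forall>y\<in>set ys. \<forall>y'\<in>set ys. length ys \<le> card {x \<in> X. E y x \<and> E y' x}"
  shows "\<exists>p. is_path (X \<union> Y) E p \<and> length p = 2 * length ys \<and> set p \<inter> Y = set ys
    \<and> card (set p \<inter> X) = length ys \<and> hd p = hd ys"
  using assms(2-)
proof (induction ys)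
  case Nil
  then show ?case by simp
next
  case (Cons y ys)
  have fX: "finite X" and disj: "X \<inter> Y = {}" and sym: "\<And>u v. E u v \<longleftrightarrow> E v u"
    using bg unfolding bipartite_graph_def by auto
  have "y \<in> Y" using Cons.prems by simp
  show ?case
  proof (cases ys)
    case Nil
    have "{x \<in> X. E y x \<and> E y x} \<noteq> {}"
      using Cons.prems(4) Nil by (auto simp del: Collect_empty_eq)
    then obtain x where "x \<in> X" "E y x" by blast
    moreover have "x \<noteq> y" and "set [y, x] \<inter> X = {x}"
      using \<open>x \<in> X\<close> \<open>y \<in> Y\<close> disj by auto
    ultimately show ?thesis
      using Nil \<open>y \<in> Y\<close> disj
      by (intro exI[of _ "[y, x]"]) (auto simp: is_path_Cons is_path_Nil)
  next
    case (Cons y' ys')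
    then obtain p where p: "is_path (X \<union> Y) E p" "length p = 2 * length ys"
      "set p \<inter> Y = set ys" "card (set p \<inter> X) = length ys" "hd p = y'"
      using Cons.IH Cons.prems by fastforce
    have "card (set p \<inter> X) < card {x \<in> X. E y x \<and> E y' x}"
      using p(4) Cons.prems(4) Cons by fastforce
    then have "\<not> {x \<in> X. E y x \<and> E y' x} \<subseteq> set p \<inter> X"
      by (meson List.finite_set card_mono finite_Int leD)
    then obtain x where x: "x \<in> X" "E y x" "E y' x" "x \<notin> set p" by blast
    have "y \<notin> set p" using p(3) \<open>y \<in> Y\<close> Cons.prems(2) by auto
    moreover have "x \<noteq> y" using \<open>x \<in> X\<close> \<open>y \<in> Y\<close> disj by blast
    moreover have "p \<noteq> []" using p(2) Cons by auto
    ultimately have "is_path (X \<union> Y) E (y # x # p)"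
      using p(1,5) x \<open>y \<in> Y\<close> sym by (auto simp: is_path_Cons)
    moreover have "set (y # x # p) \<inter> Y = set (y # ys)"
      using p(3) \<open>y \<in> Y\<close> \<open>x \<in> X\<close> disj by auto
    moreover have "set (y # x # p) \<inter> X = insert x (set p \<inter> X)"
      using \<open>y \<in> Y\<close> \<open>x \<in> X\<close> disj by auto
    ultimately show ?thesis
      using p(2,4) x(4) fX by (intro exI[of _ "y # x # p"]) auto
  qed
qed

theorem lemma2p2:
  fixes X Y :: "'a set" and E :: "'a \<Rightarrow> 'a \<Rightarrow> bool"
  assumes "bipartite_graph X Y E"
    and "\<forall>y\<in>Y. 2 * degree (X \<union> Y) E y \<ge> card X + card Y"
  shows "\<exists>p. is_path (X \<union> Y) E p \<and> length p = 2 * card Y"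
proof -
  have "finite Y" using assms(1) by (simp add: bipartite_graph_def)
  then obtain ys where ys: "set ys = Y" "distinct ys" using finite_distinct_list by blast
  then have len: "length ys = card Y" by (metis distinct_card)
  show ?thesis
  proof (cases "ys = []")
    case True
    then show ?thesis using len is_path_Nil by fastforce
  next
    case False
    then show ?thesis
      using alternating_path_through[OF assms(1) False ys(2)] ys len
        card_common_neighbours_ge[OF assms] by fastforce
  qed
qed

end
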